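(* Let $n\ge 3$ and let $\mathcal{A}$ be an arrangement of $(n-2)$-planes in $\mathbb{P}^n$ whose incidence graph $\Gamma(\mathcal{A})$ is isomorphic to the complete bipartite graph $K_{a,b}$ with $2 \le a \le b$. Then $\bigcap_{X\in\mathcal{A}} X$ is an $(n-4)$-dimensional linear subspace of $\mathbb{P}^n$.
   Context: A subspace arrangement is a finite collection of linear subspaces of $\mathbb{P}^n$ with no inclusions among distinct members. The incidence graph $\Gamma(\mathcal{A})$ has vertex set $\mathcal{A}$ and an edge between $X\ne Y$ iff $\dim(X\cap Y)$ exceeds the expected dimension, which for two $(n-2)$-planes in $\mathbb{P}^n$ is $n-4$ (the empty set has dimension $-1$; for $n=3$ an $(n-4)$-plane means the empty set). $K_{a,b}$ is the complete bipartite graph with parts of sizes $a$ and $b$. *)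

theory Defs
  imports "HOL-Analysis.Analysis"
begin

text \<open>Projective space P^n over a field k is modelled by the vector space k^(n+1),
  realised as the type 'k^'n with CARD('n) = n + 1.  A projective linear subspace
  is a linear subspace W of k^(n+1); its projective dimension is dim W - 1
  (so the empty projective subspace, W = 0, has dimension -1).\<close>

definition proj_dim :: "('k::field ^ 'n) set \<Rightarrow> int" where
  "proj_dim W = int (vec.dim W) - 1"

definition subspace_arrangement :: "('k::field ^ 'n) set set \<Rightarrow> bool" where
  "subspace_arrangement A \<longleftrightarrow> finite A \<and> (\<forall>X\<in>A. vec.subspace X) \<and>
     (\<forall>X\<in>A. \<forall>Y\<in>A. X \<noteq> Y \<longrightarrow> \<not> X \<subseteq> Y)"

text \<open>Incidence graph of an arrangement of (n-2)-planes in P^n: X and Y adjacent iff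
  X \<noteq> Y and the projective dimension of X \<inter> Y exceeds the expected dimension n - 4.\<close>

definition incident :: "nat \<Rightarrow> ('k::field ^ 'n) set \<Rightarrow> ('k ^ 'n) set \<Rightarrow> bool" where
  "incident n X Y \<longleftrightarrow> X \<noteq> Y \<and> proj_dim (X \<inter> Y) > int n - 4"

definition graph_iso :: "'a set \<Rightarrow> ('a \<Rightarrow> 'a \<Rightarrow> bool) \<Rightarrow> 'b set \<Rightarrow> ('b \<Rightarrow> 'b \<Rightarrow> bool) \<Rightarrow> bool" where
  "graph_iso V E W F \<longleftrightarrow> (\<exists>f. bij_betw f V W \<and> (\<forall>x\<in>V. \<forall>y\<in>V. E x y \<longleftrightarrow> F (f x) (f y)))"

definition Kab_verts :: "nat \<Rightarrow> nat \<Rightarrow> (nat + nat) set" where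
  "Kab_verts a b = Inl ` {..<a} \<union> Inr ` {..<b}"

definition Kab_edge :: "(nat + nat) \<Rightarrow> (nat + nat) \<Rightarrow> bool" where
  "Kab_edge x y \<longleftrightarrow> (\<exists>i j. (x = Inl i \<and> y = Inr j) \<or> (x = Inr j \<and> y = Inl i))"

end

theory Submission
  imports Defs
begin

text \<open>Two \<open>(n-2)\<close>-planes of \<open>\<bbbP>\<^sup>n\<close> always meet in dimension at least \<open>n-4\<close>, so
  non-adjacent planes meet in exactly an \<open>(n-4)\<close>-plane. If \<open>X\<^sub>1, X\<^sub>2\<close> are non-adjacent and both
  adjacent to \<open>Y\<close>, then \<open>Y \<inter> X\<^sub>1\<close> and \<open>Y \<inter> X\<^sub>2\<close> are hyperplanes (or all) of \<open>Y\<close>, so they meet in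
  dimension at least \<open>n-4\<close>; as this meet lies in the \<open>(n-4)\<close>-plane \<open>X\<^sub>1 \<inter> X\<^sub>2\<close>, it equals it, and
  \<open>X\<^sub>1 \<inter> X\<^sub>2 \<subseteq> Y\<close>. In \<open>K\<^sub>a\<^sub>,\<^sub>b\<close> with \<open>a, b \<ge> 2\<close> this puts the meet of two planes on one side into
  every plane of the other side, and vice versa, so both meets coincide and lie in every plane.\<close>

context finite_dimensional_vector_space
begin

lemma dim_add_le_dim_Int:
  assumes "subspace S" "subspace T" "subspace V" "S \<subseteq> V" "T \<subseteq> V"
  shows "dim S + dim T \<le> dim V + dim (S \<inter> T)"
proof -
  have "{x + y |x y. x \<in> S \<and> y \<in> T} \<subseteq> V"
    using assms(3-5) subspace_add by blast
  then have "dim {x + y |x y. x \<in> S \<and> y \<in> T} \<le> dim V"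
    by (rule dim_subset)
  then show ?thesis
    using dim_sums_Int[OF assms(1,2)] by linarith
qed

lemma Int_subset_of_codim_one_sections:
  assumes "subspace X\<^sub>1" "subspace X\<^sub>2" "subspace Y"
    and "dim Y \<le> dim (X\<^sub>1 \<inter> Y) + 1" "dim Y \<le> dim (X\<^sub>2 \<inter> Y) + 1"
    and "dim (X\<^sub>1 \<inter> X\<^sub>2) + 2 \<le> dim Y"
  shows "X\<^sub>1 \<inter> X\<^sub>2 \<subseteq> Y"
proof -
  have sub1: "subspace (X\<^sub>1 \<inter> Y)" and sub2: "subspace (X\<^sub>2 \<inter> Y)"
    using assms(1-3) subspace_inter by blast+
  have "dim (X\<^sub>1 \<inter> Y) + dim (X\<^sub>2 \<inter> Y) \<le> dim Y + dim ((X\<^sub>1 \<inter> Y) \<inter> (X\<^sub>2 \<inter> Y))"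
    using dim_add_le_dim_Int[OF sub1 sub2 assms(3)] by blast
  then have "dim (X\<^sub>1 \<inter> X\<^sub>2) \<le> dim ((X\<^sub>1 \<inter> Y) \<inter> (X\<^sub>2 \<inter> Y))"
    using assms(4-6) by linarith
  then have "(X\<^sub>1 \<inter> Y) \<inter> (X\<^sub>2 \<inter> Y) = X\<^sub>1 \<inter> X\<^sub>2"
    using subspace_dim_equal subspace_inter sub1 sub2 assms(1,2) by (metis Int_mono inf_le1)
  then show ?thesis
    by blast
qed

lemma Inter_eq_Int_if_complete_bipartite_sections:
  assumes subspace: "\<And>X. X \<in> L \<union> R \<Longrightarrow> subspace X"
    and dim: "\<And>X. X \<in> L \<union> R \<Longrightarrow> dim X = d"
    and across: "\<And>X Y. X \<in> L \<Longrightarrow> Y \<in> R \<Longrightarrow> d \<le> dim (X \<inter> Y) + 1"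
    and "X\<^sub>1 \<in> L" "X\<^sub>2 \<in> L" "dim (X\<^sub>1 \<inter> X\<^sub>2) + 2 \<le> d"
    and "Y\<^sub>1 \<in> R" "Y\<^sub>2 \<in> R" "dim (Y\<^sub>1 \<inter> Y\<^sub>2) + 2 \<le> d"
  shows "\<Inter>(L \<union> R) = X\<^sub>1 \<inter> X\<^sub>2"
proof -
  have in_right: "X\<^sub>1 \<inter> X\<^sub>2 \<subseteq> Y" if "Y \<in> R" for Y
    using assms(4-6) that across[of X\<^sub>1 Y] across[of X\<^sub>2 Y]
    by (intro Int_subset_of_codim_one_sections) (auto simp: subspace dim)
  have in_left: "Y\<^sub>1 \<inter> Y\<^sub>2 \<subseteq> X" if "X \<in> L" for X
    using assms(7-9) that across[of X Y\<^sub>1] across[of X Y\<^sub>2]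
    by (intro Int_subset_of_codim_one_sections) (auto simp: subspace dim inf.commute[of X])
  have "X\<^sub>1 \<inter> X\<^sub>2 = Y\<^sub>1 \<inter> Y\<^sub>2"
    using in_right in_left assms(4,5,7,8) by blast
  then show ?thesis
    using in_right in_left assms(4,5) by blast
qed

end

lemma graph_iso_Kab_sides:
  assumes "graph_iso V E (Kab_verts a b) Kab_edge" "2 \<le> a" "2 \<le> b"
  obtains L R x\<^sub>1 x\<^sub>2 y\<^sub>1 y\<^sub>2 where "V = L \<union> R" "\<And>x y. x \<in> L \<Longrightarrow> y \<in> R \<Longrightarrow> E x y"
    "x\<^sub>1 \<in> L" "x\<^sub>2 \<in> L" "x\<^sub>1 \<noteq> x\<^sub>2" "\<not> E x\<^sub>1 x\<^sub>2"
    "y\<^sub>1 \<in> R" "y\<^sub>2 \<in> R" "y\<^sub>1 \<noteq> y\<^sub>2" "\<not> E y\<^sub>1 y\<^sub>2"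
proof -
  obtain f where bij: "bij_betw f V (Kab_verts a b)"
    and edge: "\<And>x y. x \<in> V \<Longrightarrow> y \<in> V \<Longrightarrow> E x y \<longleftrightarrow> Kab_edge (f x) (f y)"
    using assms(1) unfolding graph_iso_def by blast
  define g where "g = the_inv_into V f"
  have g: "g v \<in> V" "f (g v) = v" if "v \<in> Kab_verts a b" for v
    using that bij_betwE[OF bij_betw_the_inv_into[OF bij]] f_the_inv_into_f_bij_betw[OF bij]
    unfolding g_def by blast+
  have verts: "Inl 0 \<in> Kab_verts a b" "Inl 1 \<in> Kab_verts a b"
    "Inr 0 \<in> Kab_verts a b" "Inr 1 \<in> Kab_verts a b"
    using assms(2,3) unfolding Kab_verts_def by auto
  let ?L = "{x \<in> V. \<exists>i. f x = Inl i}" and ?R = "{x \<in> V. \<exists>j. f x = Inr j}"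
  show ?thesis
  proof
    show "V = ?L \<union> ?R"
      by (auto intro: sum.exhaust)
    show "E x y" if "x \<in> ?L" "y \<in> ?R" for x y
      using that edge unfolding Kab_edge_def by auto
    show "g (Inl 0) \<in> ?L" "g (Inl 1) \<in> ?L" "g (Inr 0) \<in> ?R" "g (Inr 1) \<in> ?R"
      using g verts by auto
    show "g (Inl 0) \<noteq> g (Inl 1)" "g (Inr 0) \<noteq> g (Inr 1)"
      using g(2) verts by (metis sum.inject zero_neq_one)+
    show "\<not> E (g (Inl 0)) (g (Inl 1))" "\<not> E (g (Inr 0)) (g (Inr 1))"
      using g verts edge unfolding Kab_edge_def by auto
  qed
qed

theorem lemma2p1:
  fixes A :: "('k::field ^ 'm) set set" and n a b :: nat
  assumes "n \<ge> 3" and "CARD('m) = n + 1"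
    and "subspace_arrangement A"
    and "\<forall>X\<in>A. proj_dim X = int n - 2"
    and "graph_iso A (incident n) (Kab_verts a b) Kab_edge"
    and "2 \<le> a" and "a \<le> b"
  shows "vec.subspace (\<Inter>A) \<and> proj_dim (\<Inter>A) = int n - 4"
proof -
  have "2 \<le> b"
    using assms(6,7) by linarith
  then obtain L R X\<^sub>1 X\<^sub>2 Y\<^sub>1 Y\<^sub>2 where A: "A = L \<union> R"
    and across: "\<And>X Y. X \<in> L \<Longrightarrow> Y \<in> R \<Longrightarrow> incident n X Y"
    and X: "X\<^sub>1 \<in> L" "X\<^sub>2 \<in> L" "X\<^sub>1 \<noteq> X\<^sub>2" "\<not> incident n X\<^sub>1 X\<^sub>2"
    and Y: "Y\<^sub>1 \<in> R" "Y\<^sub>2 \<in> R" "Y\<^sub>1 \<noteq> Y\<^sub>2" "\<not> incident n Y\<^sub>1 Y\<^sub>2"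
    using graph_iso_Kab_sides[OF assms(5,6)] by blast
  have subspace: "\<And>X. X \<in> A \<Longrightarrow> vec.subspace X"
    using assms(3) unfolding subspace_arrangement_def by blast
  have dim: "\<And>X. X \<in> A \<Longrightarrow> vec.dim X = n - 1"
    using assms(1,4) unfolding proj_dim_def by fastforce
  have apart: "vec.dim (X \<inter> Y) + 2 \<le> n - 1" if "X \<noteq> Y" "\<not> incident n X Y" for X Y :: "('k ^ 'm) set"
    using that assms(1) unfolding incident_def proj_dim_def by linarith
  have adjacent: "n - 1 \<le> vec.dim (X \<inter> Y) + 1" if "incident n X Y" for X Y :: "('k ^ 'm) set"
    using that assms(1) unfolding incident_def proj_dim_def by linarith
  have meet: "\<Inter>A = X\<^sub>1 \<inter> X\<^sub>2"
    unfolding A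
  proof (rule vec.Inter_eq_Int_if_complete_bipartite_sections[where Y\<^sub>1 = Y\<^sub>1 and Y\<^sub>2 = Y\<^sub>2])
    show "n - 1 \<le> vec.dim (X \<inter> Y) + 1" if "X \<in> L" "Y \<in> R" for X Y
      using adjacent across that by blast
  qed (use subspace dim A X(1,2) Y(1,2) apart[OF X(3,4)] apart[OF Y(3,4)] in auto)
  have subspace_meet: "vec.subspace (X\<^sub>1 \<inter> X\<^sub>2)"
    using subspace X A vec.subspace_inter by blast
  have "vec.dim X\<^sub>1 + vec.dim X\<^sub>2 \<le> vec.dim (UNIV :: ('k ^ 'm) set) + vec.dim (X\<^sub>1 \<inter> X\<^sub>2)"
    using subspace X A by (intro vec.dim_add_le_dim_Int) auto
  moreover have "vec.dim (UNIV :: ('k ^ 'm) set) \<le> n + 1"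
    using dim_subset_UNIV_cart_gen assms(2) by metis
  ultimately have "vec.dim (X\<^sub>1 \<inter> X\<^sub>2) = n - 3"
    using dim X A apart[OF X(3,4)] assms(1) by fastforce
  then show ?thesis
    using meet subspace_meet assms(1) unfolding proj_dim_def by simp
qed

end
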